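(* Let $\mathbf{s}=(s_n)_{n\geq1}$ be a strictly increasing sequence of positive integers such that $s_n$ divides $s_{n+1}$ for all $n$. Then there exists a continuous injective map $\pi\colon G_{\mathbf{s}}\to\mathbb{R}$ such that the map $f=\pi\circ T_{\mathbf{s}}\circ\pi^{-1}$ on the Cantor set $\pi(G_{\mathbf{s}})$ satisfies $f'(x)=0$ for every $x\in\pi(G_{\mathbf{s}})$.
   Context: For $n\geq1$ let $\pi_n\colon\mathbb{Z}_{s_{n+1}}\to\mathbb{Z}_{s_n}$, $\pi_n(m)=m \bmod s_n$. Let $G_{\mathbf{s}}=\{x\in\prod_{n\geq1}\mathbb{Z}_{s_n}: x_n=\pi_n(x_{n+1})\text{ for all }n\}$ with the product topology (each $\mathbb{Z}_{s_n}$ discrete), and $T_{\mathbf{s}}\colon G_{\mathbf{s}}\to G_{\mathbf{s}}$ given by $T_{\mathbf{s}}(x)_n=x_n+1 \pmod{s_n}$. For $K\subseteq\mathbb{R}$ perfect and $f\colon K\to K$, $f'(x)=\lim_{y\to x,\,y\in K\setminus\{x\}}\frac{f(y)-f(x)}{y-x}$. *)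

theory Defs
  imports "HOL-Analysis.Analysis"
begin

text \<open>Sequences are indexed by n >= 1; a point of G_s is a function nat => nat
  (nat carries the discrete topology, nat => nat the product topology).
  The unused coordinate 0 is normalised to 0.\<close>

definition odometer_space :: "(nat \<Rightarrow> nat) \<Rightarrow> (nat \<Rightarrow> nat) set" where
  "odometer_space s = {x. x 0 = 0 \<and> (\<forall>n\<ge>1. x n < s n \<and> x n = x (Suc n) mod s n)}"

definition odometer_map :: "(nat \<Rightarrow> nat) \<Rightarrow> (nat \<Rightarrow> nat) \<Rightarrow> (nat \<Rightarrow> nat)" where
  "odometer_map s x = (\<lambda>n. if n = 0 then 0 else (x n + 1) mod s n)"

definition rel_deriv_is :: "(real \<Rightarrow> real) \<Rightarrow> real set \<Rightarrow> real \<Rightarrow> real \<Rightarrow> bool" where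
  "rel_deriv_is f K x d \<longleftrightarrow> ((\<lambda>y. (f y - f x) / (y - x)) \<longlongrightarrow> d) (at x within K)"

end

theory Submission
  imports Defs
begin

text \<open>A point x of G_s is encoded by its digits d_n = x_{n+1} div s_n < s_{n+1} / s_n and
  mapped to \<Sum> w_n(x_n) d_n. The weights decay so fast that the first level n at which
  two points disagree dominates the distance of their images. The weight of residue c at
  level n is \<epsilon>_n \<lambda>_n^\<rho>_n(c), where \<rho>_n increases by one under c \<mapsto> c + 1 except at the single
  residue c = s_{n-1}, which every point of G_s takes at most once. Hence, for y close to a
  fixed x, the odometer multiplies the leading weight by the tiny factor \<lambda>_n, and with
  \<lambda>_n chosen small enough the difference quotient is at most 1/(n + 1).\<close>

lemma first_difference:
  fixes x y :: "nat \<Rightarrow> 'a"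
  assumes "x 0 = y 0" "x \<noteq> y"
  obtains n where "\<forall>k\<le>n. x k = y k" "x (Suc n) \<noteq> y (Suc n)"
proof -
  have "\<exists>m. x m \<noteq> y m" using assms(2) by auto
  define m where "m = (LEAST m. x m \<noteq> y m)"
  have m: "x m \<noteq> y m" and below: "\<And>k. k < m \<Longrightarrow> x k = y k"
    unfolding m_def using LeastI_ex[OF \<open>\<exists>m. x m \<noteq> y m\<close>] not_less_Least by blast+
  obtain n where "m = Suc n" using m assms(1) by (cases m) auto
  with below m show thesis by (intro that[of n]) (auto simp: le_imp_less_Suc)
qed

lemma continuous_on_cylinder_uniformI:
  fixes f :: "(nat \<Rightarrow> 'a::discrete_topology) \<Rightarrow> 'b::metric_space"
  assumes "\<And>e. 0 < e \<Longrightarrow> \<exists>M. \<forall>x\<in>S. \<forall>y\<in>S. (\<forall>k\<le>M. x k = y k) \<longrightarrow> dist (f x) (f y) < e"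
  shows "continuous_on S f"
  unfolding continuous_on_def
proof (intro ballI tendstoI)
  fix x and e :: real assume "x \<in> S" "0 < e"
  then obtain M where M: "\<forall>y\<in>S. (\<forall>k\<le>M. y k = x k) \<longrightarrow> dist (f y) (f x) < e"
    using assms[OF \<open>0 < e\<close>] by (metis dist_commute)
  define C where "C = (\<Inter>k\<in>{..M}. (\<lambda>y. y k) -` {x k})"
  have "open ((\<lambda>y. y k) -` {x k})" for k
    by (rule open_vimage) (simp_all add: open_discrete)
  then have "open C"
    unfolding C_def by (intro open_INT) auto
  moreover have "x \<in> C" unfolding C_def by blast
  moreover have "\<forall>y\<in>C. y \<in> S \<longrightarrow> dist (f y) (f x) < e" using M unfolding C_def by blast
  ultimately show "\<forall>\<^sub>F y in at x within S. dist (f y) (f x) < e"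
    unfolding eventually_at_topological by blast
qed

lemma abs_suminf_le_geometric:
  fixes f :: "nat \<Rightarrow> real"
  assumes f: "\<And>i. \<bar>f i\<bar> \<le> c * q ^ i" and q: "0 \<le> q" "q < 1"
  shows "summable f" and "\<bar>suminf f\<bar> \<le> c / (1 - q)"
proof -
  have g: "summable (\<lambda>i. c * q ^ i)" using q by (simp add: summable_geometric summable_mult)
  have abs: "summable (\<lambda>i. \<bar>f i\<bar>)" by (rule summable_rabs_comparison_test[OF _ g]) (use f in blast)
  then show "summable f" by (rule summable_rabs_cancel)
  have "\<bar>suminf f\<bar> \<le> (\<Sum>i. \<bar>f i\<bar>)" by (rule summable_rabs[OF abs])
  also have "\<dots> \<le> (\<Sum>i. c * q ^ i)" by (rule suminf_le[OF f abs g])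
  also have "\<dots> = c / (1 - q)" using q by (simp add: suminf_mult suminf_geometric)
  finally show "\<bar>suminf f\<bar> \<le> c / (1 - q)" .
qed

lemma rotate_Suc_mod:
  fixes c p M :: nat
  assumes "p < M" "c < M" "c \<noteq> p"
  shows "((c + 1) mod M + M - p - 1) mod M = Suc ((c + M - p - 1) mod M)"
proof (cases "c < p")
  case True
  then have "(c + 1) mod M = c + 1" "(c + M - p - 1) mod M = c + M - p - 1"
    "(c + 1 + M - p - 1) mod M = c + M - p" "c + M - p = Suc (c + M - p - 1)"
    using assms by simp_all
  then show ?thesis by presburger
next
  case False
  then have "p < c" using assms(3) by simp
  then have "(c + M - p - 1) mod M = c - p - 1"
    using assms(2) by (simp add: mod_if)
  moreover have "((c + 1) mod M + M - p - 1) mod M = c - p"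
    using \<open>p < c\<close> assms(2) by (cases "c + 1 = M") (simp_all add: mod_if)
  ultimately show ?thesis using \<open>p < c\<close> by simp
qed

lemma rel_deriv_is_0I:
  assumes "\<And>e. 0 < e \<Longrightarrow> \<exists>d>0. \<forall>y\<in>K. y \<noteq> x \<and> \<bar>y - x\<bar> < d \<longrightarrow> \<bar>f y - f x\<bar> \<le> e * \<bar>y - x\<bar>"
  shows "rel_deriv_is f K x 0"
  unfolding rel_deriv_is_def
proof (rule tendstoI)
  fix e :: real assume "0 < e"
  then obtain d where "0 < d"
    and d: "\<forall>y\<in>K. y \<noteq> x \<and> \<bar>y - x\<bar> < d \<longrightarrow> \<bar>f y - f x\<bar> \<le> e / 2 * \<bar>y - x\<bar>"
    using assms[of "e / 2"] by auto
  have "dist ((f y - f x) / (y - x)) 0 < e" if "y \<in> K" "y \<noteq> x" "dist y x < d" for y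
  proof -
    have "\<bar>f y - f x\<bar> / \<bar>y - x\<bar> \<le> e / 2"
      using d that by (simp add: dist_real_def pos_divide_le_eq)
    with \<open>0 < e\<close> have "\<bar>f y - f x\<bar> / \<bar>y - x\<bar> < e" by linarith
    then show ?thesis by (simp add: dist_real_def abs_divide)
  qed
  then show "\<forall>\<^sub>F y in at x within K. dist ((f y - f x) / (y - x)) 0 < e"
    unfolding eventually_at using \<open>0 < d\<close> by blast
qed

locale divisor_chain =
  fixes s :: "nat \<Rightarrow> nat"
  assumes pos: "\<forall>n\<ge>1. 0 < s n"
    and dvd: "\<forall>n\<ge>1. s n dvd s (Suc n)"
begin

abbreviation "G \<equiv> odometer_space s"
abbreviation "T \<equiv> odometer_map s"

text \<open>Extending the chain by s 0 = 1 makes the conditions on coordinate 0 of a point of G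
  instances of the general ones.\<close>
definition modulus :: "nat \<Rightarrow> nat" where
  "modulus n = (if n = 0 then 1 else s n)"

definition ratio :: "nat \<Rightarrow> nat" where
  "ratio n = modulus (Suc n) div modulus n"

definition digit :: "(nat \<Rightarrow> nat) \<Rightarrow> nat \<Rightarrow> nat" where
  "digit x n = x (Suc n) div modulus n"

lemma modulus_pos: "0 < modulus n"
  using pos by (simp add: modulus_def)

lemma modulus_Suc: "modulus (Suc n) = modulus n * ratio n"
  using dvd by (simp add: modulus_def ratio_def)

lemma ratio_pos: "0 < ratio n"
  using modulus_Suc[of n] modulus_pos[of "Suc n"] by (cases "ratio n") simp_all

lemma modulus_dvd: "k \<le> m \<Longrightarrow> modulus k dvd modulus m"
  by (induction m rule: dec_induct) (auto simp: modulus_Suc)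

lemma odometer_space_iff: "x \<in> G \<longleftrightarrow> (\<forall>n. x n < modulus n \<and> x n = x (Suc n) mod modulus n)"
proof
  assume "x \<in> G"
  then have "x 0 = 0" "\<forall>n\<ge>1. x n < s n \<and> x n = x (Suc n) mod s n"
    unfolding odometer_space_def by blast+
  then show "\<forall>n. x n < modulus n \<and> x n = x (Suc n) mod modulus n"
    unfolding modulus_def by (metis One_nat_def leI less_one mod_by_1)
next
  assume x: "\<forall>n. x n < modulus n \<and> x n = x (Suc n) mod modulus n"
  then have "x 0 = 0" unfolding modulus_def by (metis less_one)
  moreover have "\<forall>n\<ge>1. x n < s n \<and> x n = x (Suc n) mod s n"
    using x unfolding modulus_def by (metis not_one_le_zero)
  ultimately show "x \<in> G" unfolding odometer_space_def by blast
qed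

lemma odometer_space_0: "x \<in> G \<Longrightarrow> x 0 = 0"
  by (simp add: odometer_space_def)

lemma odometer_space_first_difference:
  assumes "x \<in> G" "y \<in> G" "x \<noteq> y"
  obtains n where "\<forall>k\<le>n. x k = y k" "x (Suc n) \<noteq> y (Suc n)"
  using first_difference[of x y] odometer_space_0 assms by metis

lemma odometer_map_apply: "T x n = (x n + 1) mod modulus n"
  by (simp add: odometer_map_def modulus_def)

lemma odometer_space_less: "x \<in> G \<Longrightarrow> x n < modulus n"
  unfolding odometer_space_iff by blast

text \<open>Not a simp rule: it would rewrite x n to x (Suc n) mod modulus n indefinitely.\<close>
lemma odometer_space_mod_Suc: "x \<in> G \<Longrightarrow> x n = x (Suc n) mod modulus n"
  unfolding odometer_space_iff by blast

lemma odometer_space_mod: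
  assumes "x \<in> G" "k \<le> m"
  shows "x k = x m mod modulus k"
  using assms(2)
proof (induction m rule: dec_induct)
  case base
  show ?case using odometer_space_less[OF assms(1)] by simp
next
  case (step m)
  have "x k = x (Suc m) mod modulus m mod modulus k"
    using step.IH odometer_space_mod_Suc[OF assms(1), of m] by simp
  with step show ?case by (simp add: mod_mod_cancel modulus_dvd)
qed

lemma odometer_space_Suc: "x \<in> G \<Longrightarrow> x (Suc n) = x n + modulus n * digit x n"
  using odometer_space_mod[of x n "Suc n"] by (simp add: digit_def)

lemma digit_less: "x \<in> G \<Longrightarrow> digit x n < ratio n"
  using odometer_space_less[of x "Suc n"] modulus_pos[of n]
  by (simp add: digit_def modulus_Suc less_mult_imp_div_less mult.commute)

lemma odometer_map_in_space:
  assumes "x \<in> G"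
  shows "T x \<in> G"
proof -
  have step: "(x n + 1) mod modulus n = (x (Suc n) + 1) mod modulus (Suc n) mod modulus n" for n
  proof -
    have "(x (Suc n) + 1) mod modulus (Suc n) mod modulus n = (x (Suc n) + 1) mod modulus n"
      by (simp add: mod_mod_cancel modulus_Suc)
    also have "\<dots> = (x (Suc n) mod modulus n + 1) mod modulus n"
      by (simp add: mod_Suc_eq)
    finally show ?thesis using odometer_space_mod_Suc[OF assms, of n] by simp
  qed
  show ?thesis
    unfolding odometer_space_iff odometer_map_apply
  proof (intro allI conjI)
    show "(x n + 1) mod modulus n < modulus n" for n by (simp add: modulus_pos)
  qed (rule step)
qed

lemma odometer_map_first_difference:
  assumes "x \<in> G" "y \<in> G" "\<forall>k\<le>n. x k = y k" "x (Suc n) \<noteq> y (Suc n)"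
  shows "\<forall>k\<le>n. T x k = T y k" "T x (Suc n) \<noteq> T y (Suc n)"
  using assms odometer_space_less[of _ "Suc n"]
  by (auto simp: odometer_map_apply mod_Suc split: if_splits)

text \<open>Two such coordinates are impossible: the later one forces the earlier one to vanish.\<close>
lemma odometer_space_eventually_not_wrap:
  assumes "x \<in> G"
  shows "\<exists>B. \<forall>n>B. x n \<noteq> modulus (n - 1)"
proof (cases "\<exists>n. x n = modulus (n - 1)")
  case False
  then show ?thesis by blast
next
  case True
  then obtain n0 where n0: "x n0 = modulus (n0 - 1)" by blast
  have "x n \<noteq> modulus (n - 1)" if "n0 < n" for n
  proof
    assume "x n = modulus (n - 1)"
    then have "x (n - 1) = 0"
      using odometer_space_mod[OF assms, of "n - 1" n] by simp
    then have "x n0 = 0"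
      using odometer_space_mod[OF assms, of n0 "n - 1"] that by simp
    moreover have "0 < modulus (n0 - 1)" by (rule modulus_pos)
    ultimately show False using n0 by simp
  qed
  then show ?thesis by blast
qed

end

locale strict_divisor_chain = divisor_chain +
  assumes incr: "\<forall>n\<ge>1. s n < s (Suc n)"
begin

text \<open>The offset puts the wrap-around of the exponent at c = modulus (n - 1), a value that
  each point of G takes at most once.\<close>
definition rotation :: "nat \<Rightarrow> nat \<Rightarrow> nat" where
  "rotation n c = (c + modulus n - modulus (n - 1) - 1) mod modulus n"

text \<open>Chosen so that 2 * contraction n * (ratio n + 1) = 1 / (n + 1).\<close>
definition contraction :: "nat \<Rightarrow> real" where
  "contraction n = 1 / (2 * (real (ratio n) + 1) * (real n + 1))"

text \<open>Chosen so that digit_bound (Suc n) = min_weight n / 8.\<close>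
fun amplitude :: "nat \<Rightarrow> real" where
  "amplitude 0 = 1"
| "amplitude (Suc n) = amplitude n * contraction n ^ modulus n / (8 * real (ratio (Suc n)))"

definition weight :: "nat \<Rightarrow> nat \<Rightarrow> real" where
  "weight n c = amplitude n * contraction n ^ rotation n c"

definition min_weight :: "nat \<Rightarrow> real" where
  "min_weight n = amplitude n * contraction n ^ modulus n"

definition digit_bound :: "nat \<Rightarrow> real" where
  "digit_bound n = amplitude n * real (ratio n)"

definition summand :: "(nat \<Rightarrow> nat) \<Rightarrow> nat \<Rightarrow> real" where
  "summand x n = weight n (x n) * real (digit x n)"

definition embedding :: "(nat \<Rightarrow> nat) \<Rightarrow> real" where
  "embedding x = (\<Sum>n. summand x n)"

lemma contraction_pos: "0 < contraction n"
  by (simp add: contraction_def)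

lemma contraction_le_1: "contraction n \<le> 1"
proof -
  have "1 \<le> 2 * (real (ratio n) + 1) * (real n + 1)"
    using mult_mono[of 1 "2 * (real (ratio n) + 1)" 1 "real n + 1"] by simp
  then show ?thesis by (simp add: contraction_def)
qed

lemma amplitude_pos: "0 < amplitude n"
  using ratio_pos contraction_pos by (induction n) simp_all

lemma weight_pos: "0 < weight n c"
  by (simp add: weight_def amplitude_pos contraction_pos)

lemma weight_le_amplitude: "weight n c \<le> amplitude n"
  unfolding weight_def
  using amplitude_pos[of n] contraction_pos[of n] contraction_le_1[of n]
  by (simp add: power_le_one mult_left_le)

lemma min_weight_pos: "0 < min_weight n"
  by (simp add: min_weight_def amplitude_pos contraction_pos)

lemma min_weight_le_weight: "min_weight n \<le> weight n c"
  unfolding min_weight_def weight_def rotation_def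
  using amplitude_pos[of n] contraction_pos[of n] contraction_le_1[of n] modulus_pos[of n]
  by (simp add: power_decreasing)

lemma digit_bound_Suc: "digit_bound (Suc n) = min_weight n / 8"
  using ratio_pos[of "Suc n"] by (simp add: digit_bound_def min_weight_def)

lemma min_weight_le_digit_bound: "min_weight n \<le> digit_bound n"
proof -
  have "min_weight n \<le> amplitude n"
    using min_weight_le_weight weight_le_amplitude by (rule order_trans)
  also have "\<dots> \<le> digit_bound n"
    using amplitude_pos[of n] ratio_pos[of n] by (simp add: digit_bound_def)
  finally show ?thesis .
qed

lemma digit_bound_geometric: "digit_bound (i + n) \<le> digit_bound n * (1 / 8) ^ i"
proof (induction i)
  case (Suc i)
  have "digit_bound (Suc i + n) \<le> digit_bound (i + n) / 8"
    using digit_bound_Suc min_weight_le_digit_bound by simp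
  with Suc show ?case by simp
qed simp

lemma min_weight_antimono: "n \<le> N \<Longrightarrow> min_weight N \<le> min_weight n"
proof (rule lift_Suc_antimono_le[of min_weight])
  show "min_weight (Suc n) \<le> min_weight n" for n
    using min_weight_le_digit_bound[of "Suc n"] digit_bound_Suc[of n] min_weight_pos[of "Suc n"]
    by simp
qed

lemma weight_odometer_step:
  assumes "2 \<le> n" "c < modulus n" "c \<noteq> modulus (n - 1)"
  shows "weight n ((c + 1) mod modulus n) = weight n c * contraction n"
proof -
  have "modulus (n - 1) < modulus n"
    using incr[rule_format, of "n - 1"] assms(1) by (simp add: modulus_def)
  then show ?thesis
    using rotate_Suc_mod[OF _ assms(2,3)] by (simp add: weight_def rotation_def)
qed

lemma abs_summand_le: "x \<in> G \<Longrightarrow> \<bar>summand x n\<bar> \<le> digit_bound n"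
  unfolding summand_def digit_bound_def
  using weight_pos[of n "x n"] weight_le_amplitude[of n "x n"] digit_less[of x n]
  by (simp add: abs_mult mult_mono)

lemma summable_summand:
  assumes "x \<in> G"
  shows "summable (summand x)"
proof (rule abs_suminf_le_geometric(1))
  show "\<bar>summand x n\<bar> \<le> digit_bound 0 * (1 / 8) ^ n" for n
    using abs_summand_le[OF assms, of n] digit_bound_geometric[of n 0] by simp
qed simp_all

lemma summable_summand_diff_shift:
  assumes "x \<in> G" "y \<in> G"
  shows "summable (\<lambda>i. summand x (i + m) - summand y (i + m))"
    and "\<bar>\<Sum>i. summand x (i + m) - summand y (i + m)\<bar> \<le> 16 / 7 * digit_bound m"
proof -
  have bound: "\<bar>summand x (i + m) - summand y (i + m)\<bar> \<le> 2 * digit_bound m * (1 / 8) ^ i" for i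
    using abs_summand_le[OF assms(1), of "i + m"] abs_summand_le[OF assms(2), of "i + m"]
      digit_bound_geometric[of i m] by simp
  show "summable (\<lambda>i. summand x (i + m) - summand y (i + m))"
    by (rule abs_suminf_le_geometric(1)[OF bound]) simp_all
  show "\<bar>\<Sum>i. summand x (i + m) - summand y (i + m)\<bar> \<le> 16 / 7 * digit_bound m"
    using abs_suminf_le_geometric(2)[OF bound] by simp
qed

lemma embedding_diff_eq_tail:
  assumes x: "x \<in> G" and y: "y \<in> G" and agree: "\<forall>k\<le>m. x k = y k"
  shows "embedding x - embedding y = (\<Sum>i. summand x (i + m) - summand y (i + m))"
proof -
  have summable: "summable (\<lambda>k. summand x k - summand y k)"
    using summable_summand[OF x] summable_summand[OF y] by (rule summable_diff)
  have head: "(\<Sum>k<m. summand x k - summand y k) = 0"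
    using agree by (intro sum.neutral) (simp add: summand_def digit_def Suc_leI)
  have "embedding x - embedding y = (\<Sum>k. summand x k - summand y k)"
    unfolding embedding_def using summable_summand[OF x] summable_summand[OF y]
    by (rule suminf_diff)
  also have "\<dots> = (\<Sum>i. summand x (i + m) - summand y (i + m))"
    using suminf_split_initial_segment[OF summable, of m] head by simp
  finally show ?thesis .
qed

text \<open>The digit at the first level of disagreement dominates: the whole tail after it
  is at most 2/7 of its weight.\<close>
lemma embedding_diff_bounds:
  assumes x: "x \<in> G" and y: "y \<in> G"
    and agree: "\<forall>k\<le>n. x k = y k" and differ: "x (Suc n) \<noteq> y (Suc n)"
  shows "weight n (x n) / 2 \<le> \<bar>embedding x - embedding y\<bar>"
    and "\<bar>embedding x - embedding y\<bar> \<le> weight n (x n) * (real (ratio n) + 1)"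
proof -
  define W where "W = weight n (x n)"
  define D where "D = real (digit x n) - real (digit y n)"
  define R where "R = (\<Sum>i. summand x (i + Suc n) - summand y (i + Suc n))"
  have "embedding x - embedding y = (\<Sum>i. summand x (i + n) - summand y (i + n))"
    by (rule embedding_diff_eq_tail[OF x y agree])
  also have "\<dots> = (summand x n - summand y n) + R"
    using suminf_split_head[OF summable_summand_diff_shift(1)[OF x y, of n]]
    unfolding R_def by simp
  also have "summand x n - summand y n = W * D"
    using agree by (simp add: summand_def W_def D_def algebra_simps)
  finally have split: "embedding x - embedding y = W * D + R" .
  have "\<bar>R\<bar> \<le> 16 / 7 * digit_bound (Suc n)"
    unfolding R_def by (rule summable_summand_diff_shift(2)[OF x y])
  also have "\<dots> \<le> 2 / 7 * W"
    using digit_bound_Suc[of n] min_weight_le_weight[of n "x n"] unfolding W_def by simp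
  finally have R: "\<bar>R\<bar> \<le> 2 / 7 * W" .
  have "digit x n \<noteq> digit y n"
    using odometer_space_Suc[OF x, of n] odometer_space_Suc[OF y, of n] agree differ by auto
  then have D_lower: "1 \<le> \<bar>D\<bar>" unfolding D_def by linarith
  have D_upper: "\<bar>D\<bar> \<le> real (ratio n)"
    using digit_less[OF x, of n] digit_less[OF y, of n] unfolding D_def by linarith
  have "0 < W" unfolding W_def by (rule weight_pos)
  then have "W \<le> \<bar>W * D\<bar>" "\<bar>W * D\<bar> \<le> W * real (ratio n)"
    using D_lower D_upper by (simp_all add: abs_mult)
  moreover have "\<bar>W * D\<bar> - \<bar>R\<bar> \<le> \<bar>embedding x - embedding y\<bar>"
    and "\<bar>embedding x - embedding y\<bar> \<le> \<bar>W * D\<bar> + \<bar>R\<bar>"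
    unfolding split using abs_triangle_ineq2[of "W * D" "- R"] abs_triangle_ineq[of "W * D" R]
    by simp_all
  ultimately show "weight n (x n) / 2 \<le> \<bar>embedding x - embedding y\<bar>"
    and "\<bar>embedding x - embedding y\<bar> \<le> weight n (x n) * (real (ratio n) + 1)"
    using R unfolding W_def[symmetric] by (simp_all add: algebra_simps)
qed

lemma inj_on_embedding: "inj_on embedding G"
proof (rule inj_onI, rule ccontr)
  fix x y assume x: "x \<in> G" and y: "y \<in> G" and "embedding x = embedding y" and "x \<noteq> y"
  moreover obtain n where "\<forall>k\<le>n. x k = y k" "x (Suc n) \<noteq> y (Suc n)"
    using odometer_space_first_difference[OF x y \<open>x \<noteq> y\<close>] by blast
  ultimately show False
    using embedding_diff_bounds(1)[of x y n] weight_pos[of n "x n"] by simp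
qed

lemma continuous_on_embedding: "continuous_on G embedding"
proof (rule continuous_on_cylinder_uniformI)
  fix e :: real assume "0 < e"
  have "0 < digit_bound 0" using ratio_pos[of 0] by (simp add: digit_bound_def)
  then obtain M where M: "(1 / 8) ^ M < e / (16 / 7 * digit_bound 0)"
    using real_arch_pow_inv[of "e / (16 / 7 * digit_bound 0)" "1 / 8"] \<open>0 < e\<close> by auto
  have "dist (embedding x) (embedding y) < e"
    if "x \<in> G" "y \<in> G" "\<forall>k\<le>M. x k = y k" for x y
  proof -
    have "dist (embedding x) (embedding y) \<le> 16 / 7 * digit_bound M"
      using embedding_diff_eq_tail[OF that] summable_summand_diff_shift(2)[OF that(1,2)]
      by (simp add: dist_real_def)
    also have "\<dots> \<le> 16 / 7 * (digit_bound 0 * (1 / 8) ^ M)"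
      using digit_bound_geometric[of M 0] by simp
    also have "\<dots> < e"
      using M \<open>0 < digit_bound 0\<close> by (simp add: field_simps)
    finally show ?thesis .
  qed
  then show "\<exists>M. \<forall>x\<in>G. \<forall>y\<in>G. (\<forall>k\<le>M. x k = y k) \<longrightarrow> dist (embedding x) (embedding y) < e"
    by blast
qed

lemma contraction_mult_ratio: "contraction n * (real (ratio n) + 1) = 1 / (2 * (real n + 1))"
proof -
  define a where "a = real (ratio n) + 1"
  define b where "b = real n + 1"
  have "0 < a" "0 < b" unfolding a_def b_def by (simp_all add: add_pos_nonneg)
  then have "1 / (2 * a * b) * a = 1 / (2 * b)" by (simp add: field_simps)
  then show ?thesis unfolding contraction_def a_def b_def .
qed

lemma embedding_odometer_map_diff_le:
  assumes x: "x \<in> G" and y: "y \<in> G"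
    and agree: "\<forall>k\<le>n. x k = y k" and differ: "x (Suc n) \<noteq> y (Suc n)"
    and "2 \<le> n" and no_wrap: "x n \<noteq> modulus (n - 1)"
  shows "\<bar>embedding (T x) - embedding (T y)\<bar> \<le> \<bar>embedding x - embedding y\<bar> / (real n + 1)"
proof -
  define W where "W = weight n (x n)"
  have "weight n (T x n) = W * contraction n"
    unfolding W_def odometer_map_apply
    by (rule weight_odometer_step[OF \<open>2 \<le> n\<close> odometer_space_less[OF x] no_wrap])
  then have "\<bar>embedding (T x) - embedding (T y)\<bar> \<le> W * contraction n * (real (ratio n) + 1)"
    using embedding_diff_bounds(2)[OF odometer_map_in_space[OF x] odometer_map_in_space[OF y]
        odometer_map_first_difference[OF x y agree differ]] by simp
  also have "\<dots> = W * (1 / (2 * (real n + 1)))"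
    by (simp only: mult.assoc contraction_mult_ratio)
  also have "\<dots> = W / 2 / (real n + 1)"
    by simp
  also have "\<dots> \<le> \<bar>embedding x - embedding y\<bar> / (real n + 1)"
    using embedding_diff_bounds(1)[OF x y agree differ] unfolding W_def
    by (intro divide_right_mono) simp_all
  finally show ?thesis .
qed

lemma first_difference_index_gt:
  assumes "x \<in> G" "y \<in> G" "\<forall>k\<le>n. x k = y k" "x (Suc n) \<noteq> y (Suc n)"
    and close: "\<bar>embedding x - embedding y\<bar> < min_weight N / 2"
  shows "N < n"
proof (rule ccontr)
  assume "\<not> N < n"
  then have "min_weight N \<le> weight n (x n)"
    using min_weight_antimono[of n N] min_weight_le_weight[of n "x n"] by simp
  with embedding_diff_bounds(1)[OF assms(1-4)] close show False by simp
qed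

lemma embedding_conjugate_deriv:
  assumes x: "x \<in> G"
  shows "rel_deriv_is (embedding \<circ> T \<circ> inv_into G embedding) (embedding ` G) (embedding x) 0"
proof (rule rel_deriv_is_0I)
  fix e :: real assume "0 < e"
  obtain B where B: "\<forall>n>B. x n \<noteq> modulus (n - 1)"
    using odometer_space_eventually_not_wrap[OF x] by blast
  obtain N0 where N0: "inverse (real (Suc N0)) < e"
    using reals_Archimedean[OF \<open>0 < e\<close>] by blast
  define N where "N = max (max B N0) 2"
  let ?f = "embedding \<circ> T \<circ> inv_into G embedding"
  have "\<bar>?f q - ?f (embedding x)\<bar> \<le> e * \<bar>q - embedding x\<bar>"
    if "q \<in> embedding ` G" "q \<noteq> embedding x" "\<bar>q - embedding x\<bar> < min_weight N / 2" for q
  proof -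
    from that(1) obtain y where y: "y \<in> G" and q: "q = embedding y" by blast
    with that(2) have "x \<noteq> y" by auto
    then obtain n where agree: "\<forall>k\<le>n. x k = y k" and differ: "x (Suc n) \<noteq> y (Suc n)"
      using odometer_space_first_difference[OF x y] by blast
    have "N < n"
      using first_difference_index_gt[OF x y agree differ] that(3) q by (simp add: abs_minus_commute)
    then have "2 \<le> n" "x n \<noteq> modulus (n - 1)" "N0 < n"
      unfolding N_def using B by auto
    have "1 / (real n + 1) \<le> 1 / (real N0 + 1)"
      using \<open>N0 < n\<close> by (intro divide_left_mono) auto
    also have "\<dots> < e"
      using N0 by (simp add: inverse_eq_divide add.commute)
    finally have "1 / (real n + 1) \<le> e" by (rule less_imp_le)
    have "\<bar>embedding (T y) - embedding (T x)\<bar> \<le> \<bar>embedding y - embedding x\<bar> * (1 / (real n + 1))"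
      using embedding_odometer_map_diff_le[OF x y agree differ \<open>2 \<le> n\<close> \<open>x n \<noteq> modulus (n - 1)\<close>]
      by (simp add: abs_minus_commute)
    also have "\<dots> \<le> \<bar>embedding y - embedding x\<bar> * e"
      using \<open>1 / (real n + 1) \<le> e\<close> by (rule mult_left_mono) simp
    finally show ?thesis
      using q x y inj_on_embedding by (simp add: inv_into_f_f mult.commute)
  qed
  then show "\<exists>d>0. \<forall>q\<in>embedding ` G. q \<noteq> embedding x \<and> \<bar>q - embedding x\<bar> < d \<longrightarrow>
      \<bar>?f q - ?f (embedding x)\<bar> \<le> e * \<bar>q - embedding x\<bar>"
    using min_weight_pos[of N] by (intro exI[of _ "min_weight N / 2"]) auto
qed

end

theorem theorem3p1:
  fixes s :: "nat \<Rightarrow> nat"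
  assumes pos: "\<forall>n\<ge>1. 0 < s n"
    and incr: "\<forall>n\<ge>1. s n < s (Suc n)"
    and dvd: "\<forall>n\<ge>1. s n dvd s (Suc n)"
  shows "\<exists>\<pi> :: (nat \<Rightarrow> nat) \<Rightarrow> real.
           continuous_on (odometer_space s) \<pi> \<and> inj_on \<pi> (odometer_space s) \<and>
           (\<forall>x\<in>\<pi> ` odometer_space s.
              rel_deriv_is (\<pi> \<circ> odometer_map s \<circ> inv_into (odometer_space s) \<pi>)
                (\<pi> ` odometer_space s) x 0)"
proof -
  interpret strict_divisor_chain s
    using pos dvd incr by unfold_locales
  show ?thesis
    using continuous_on_embedding inj_on_embedding embedding_conjugate_deriv by blast
qed

end
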